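(* Let $n$ be a positive integer and let $p_1,\dots,p_r$ be pairwise coprime positive integers, and $m=\prod_{i=1}^r p_i$. Then $P(m,n)=\mathrm{lcm}\left(P(p_1,n),\dots,P(p_r,n)\right)$.
   Context: For positive integers $m,n$, let $\mathbf{Z}_m$ be the integers modulo $m$ and $T:\mathbf{Z}_m^n\to\mathbf{Z}_m^n$, $T(a_0,\dots,a_{n-1})=(a_0+a_1,a_1+a_2,\dots,a_{n-1}+a_0)$. For $\mathbf{a}\in\mathbf{Z}_m^n$ the cycle length of $(T^k\mathbf{a})_{k\ge0}$ is the smallest positive integer $P$ such that there is $N$ with $T^{k+P}\mathbf{a}=T^k\mathbf{a}$ for all $k\ge N$. $P(m,n)$ denotes the maximum of these cycle lengths over all $\mathbf{a}\in\mathbf{Z}_m^n$. *)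

theory Defs
  imports Main
begin

text \<open>Elements of Z_m^n are represented as functions a :: nat => int with
  components a i in {0..<m} for i < n (standard representatives) and a i = 0 for i >= n.
  Indices are taken modulo n.\<close>

definition vecs :: "nat \<Rightarrow> nat \<Rightarrow> (nat \<Rightarrow> int) set" where
  "vecs m n = {a. (\<forall>i<n. 0 \<le> a i \<and> a i < int m) \<and> (\<forall>i\<ge>n. a i = 0)}"

definition Tmap :: "nat \<Rightarrow> nat \<Rightarrow> (nat \<Rightarrow> int) \<Rightarrow> (nat \<Rightarrow> int)" where
  "Tmap m n a = (\<lambda>i. if i < n then (a i + a (Suc i mod n)) mod int m else 0)"

definition cycle_length :: "nat \<Rightarrow> nat \<Rightarrow> (nat \<Rightarrow> int) \<Rightarrow> nat" where
  "cycle_length m n a =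
     (LEAST P. 0 < P \<and> (\<exists>N. \<forall>k\<ge>N. (Tmap m n ^^ (k + P)) a = (Tmap m n ^^ k) a))"

definition Pmax :: "nat \<Rightarrow> nat \<Rightarrow> nat" where
  "Pmax m n = Max (cycle_length m n ` vecs m n)"

end

theory Submission
  imports Defs "HOL-Number_Theory.Cong"
begin

text \<open>Lift T to integer vectors without reduction and reduce afterwards. The lifted map is
  linear and commutes with cyclic shifts, so every orbit is a superposition of shifted copies of the
  orbit of the unit vector \<open>\<delta> = (1, 0, \<dots>, 0)\<close>; hence an eventual period of the orbit of
  \<open>\<delta>\<close> modulo m is one of every orbit, and P(m, n) is the least eventual period of that orbit.
  The eventual periods of a sequence are exactly the multiples of the least one, and by the Chinese
  remainder theorem a period works modulo \<open>\<Prod>p\<^sub>i\<close> iff it works modulo each \<open>p\<^sub>i\<close>; so the least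
  period modulo the product is the lcm of the least periods modulo the factors.\<close>

definition eventual_period :: "(nat \<Rightarrow> 'a) \<Rightarrow> nat \<Rightarrow> bool" where
  "eventual_period f P \<longleftrightarrow> (\<forall>\<^sub>F k in sequentially. f (k + P) = f k)"

definition least_eventual_period :: "(nat \<Rightarrow> 'a) \<Rightarrow> nat" where
  "least_eventual_period f = (LEAST P. 0 < P \<and> eventual_period f P)"

lemma eventual_period_0: "eventual_period f 0"
  by (simp add: eventual_period_def)

lemma eventual_period_add:
  assumes "eventual_period f a" "eventual_period f b"
  shows "eventual_period f (a + b)"
proof -
  have "\<forall>\<^sub>F k in sequentially. f (k + a + b) = f (k + a)"
    using assms(2) eventually_sequentially_seg[of "\<lambda>k. f (k + b) = f k" a]
    by (simp add: eventual_period_def ac_simps)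
  with assms(1) show ?thesis
    unfolding eventual_period_def by eventually_elim (simp add: add.assoc)
qed

lemma eventual_period_diff:
  assumes "eventual_period f (a + b)" "eventual_period f a"
  shows "eventual_period f b"
proof -
  have "\<forall>\<^sub>F k in sequentially. f (k + b + a) = f (k + b)"
    using assms(2) eventually_sequentially_seg[of "\<lambda>k. f (k + a) = f k" b]
    by (simp add: eventual_period_def ac_simps)
  with assms(1) show ?thesis
    unfolding eventual_period_def by eventually_elim (simp add: ac_simps)
qed

lemma eventual_period_mult: "eventual_period f a \<Longrightarrow> eventual_period f (a * q)"
  by (induction q) (simp_all add: eventual_period_0 eventual_period_add add.commute)

lemma least_eventual_period:
  assumes "eventual_period f P" "0 < P"
  shows "0 < least_eventual_period f" "eventual_period f (least_eventual_period f)"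
  using LeastI[of "\<lambda>P. 0 < P \<and> eventual_period f P", OF conjI[OF assms(2,1)]]
  by (simp_all add: least_eventual_period_def)

lemma eventual_period_iff_dvd:
  assumes "eventual_period f P" "0 < P"
  shows "eventual_period f x \<longleftrightarrow> least_eventual_period f dvd x"
proof
  define L where "L = least_eventual_period f"
  have L: "0 < L" "eventual_period f L"
    using least_eventual_period[OF assms] by (simp_all add: L_def)
  assume "eventual_period f x"
  moreover have "x = L * (x div L) + x mod L" by simp
  ultimately have "eventual_period f (x mod L)"
    by (metis eventual_period_diff eventual_period_mult[OF L(2)])
  then have "\<not> 0 < x mod L"
    using not_less_Least[of "x mod L" "\<lambda>P. 0 < P \<and> eventual_period f P"] L(1)
    by (auto simp: L_def least_eventual_period_def)
  then show "L dvd x" by (simp add: mod_eq_0_iff_dvd)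
next
  assume "least_eventual_period f dvd x"
  then show "eventual_period f x"
    using eventual_period_mult least_eventual_period[OF assms] by (auto simp: dvd_def)
qed

lemma eventual_period_funpow:
  fixes F :: "'a \<Rightarrow> 'a"
  assumes "finite (range (\<lambda>k. (F ^^ k) x))"
  shows "\<exists>P>0. eventual_period (\<lambda>k. (F ^^ k) x) P"
proof -
  have "\<not> inj (\<lambda>k. (F ^^ k) x)"
    using finite_imageD[OF assms] by auto
  then obtain i j where ij: "i < j" "(F ^^ i) x = (F ^^ j) x"
    unfolding inj_def by (metis linorder_neqE_nat)
  have "(F ^^ (k + (j - i))) x = (F ^^ k) x" if "i \<le> k" for k
  proof -
    have "k + (j - i) = (k - i) + j" "k = (k - i) + i" using that ij(1) by simp_all
    then show ?thesis using ij(2) by (metis comp_apply funpow_add)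
  qed
  then have "eventual_period (\<lambda>k. (F ^^ k) x) (j - i)"
    unfolding eventual_period_def eventually_sequentially by blast
  with ij(1) show ?thesis by (intro exI[of _ "j - i"]) simp
qed

definition Tint :: "nat \<Rightarrow> (nat \<Rightarrow> int) \<Rightarrow> nat \<Rightarrow> int" where
  "Tint n a = (\<lambda>i. a i + a (Suc i mod n))"

definition reduce :: "nat \<Rightarrow> nat \<Rightarrow> (nat \<Rightarrow> int) \<Rightarrow> nat \<Rightarrow> int" where
  "reduce m n a = (\<lambda>i. if i < n then a i mod int m else 0)"

definition delta :: "nat \<Rightarrow> int" where
  "delta i = (if i = 0 then 1 else 0)"

lemma reduce_eq_iff: "reduce m n u = reduce m n v \<longleftrightarrow> (\<forall>i<n. [u i = v i] (mod int m))"
  by (auto simp: reduce_def cong_def fun_eq_iff)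

lemma reduce_vecs: "a \<in> vecs m n \<Longrightarrow> reduce m n a = a"
  by (auto simp: reduce_def vecs_def fun_eq_iff)

lemma reduce_in_vecs: "0 < m \<Longrightarrow> reduce m n a \<in> vecs m n"
  by (auto simp: reduce_def vecs_def)

lemma finite_vecs: "finite (vecs m n)"
proof (rule finite_subset)
  show "vecs m n \<subseteq> {a. \<forall>i. (i \<in> {..<n} \<longrightarrow> a i \<in> {0..<int m}) \<and> (i \<notin> {..<n} \<longrightarrow> a i = 0)}"
    unfolding vecs_def by auto
  show "finite {a. \<forall>i. (i \<in> {..<n} \<longrightarrow> a i \<in> {0..<int m}) \<and> (i \<notin> {..<n} \<longrightarrow> a i = 0)}"
    by (intro finite_set_of_finite_funs finite_lessThan finite_atLeastLessThan_int)
qed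

lemma Tmap_reduce: "0 < n \<Longrightarrow> Tmap m n (reduce m n a) = reduce m n (Tint n a)"
  by (auto simp: Tmap_def reduce_def Tint_def fun_eq_iff mod_add_eq)

lemma Tmap_funpow_reduce: "0 < n \<Longrightarrow> (Tmap m n ^^ k) (reduce m n a) = reduce m n ((Tint n ^^ k) a)"
  by (induction k) (simp_all add: Tmap_reduce)

text \<open>\<open>(i + (n - j)) mod n\<close> is the cyclic index \<open>i - j\<close>; going through n avoids truncated subtraction.\<close>

lemma delta_convolution:
  assumes "i < n"
  shows "a i = (\<Sum>j<n. a j * delta ((i + (n - j)) mod n))"
proof -
  have "a j * delta ((i + (n - j)) mod n) = (if j = i then a i else 0)" if "j < n" for j
  proof (cases "j \<le> i")
    case True
    then have "(i + (n - j)) mod n = i - j" using assms by (simp add: mod_if)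
    then show ?thesis using True by (simp add: delta_def)
  next
    case False
    then show ?thesis using that by (simp add: delta_def)
  qed
  then have "(\<Sum>j<n. a j * delta ((i + (n - j)) mod n)) = (\<Sum>j<n. if j = i then a i else 0)"
    by (intro sum.cong) simp_all
  then show ?thesis using assms by simp
qed

lemma Tint_funpow_convolution:
  assumes "i < n"
  shows "(Tint n ^^ k) a i = (\<Sum>j<n. a j * (Tint n ^^ k) delta ((i + (n - j)) mod n))"
  using assms
proof (induction k arbitrary: i)
  case 0
  then show ?case using delta_convolution[of i n a] by simp
next
  case (Suc k)
  define c where "c = (Tint n ^^ k) delta"
  define l where "l j = (i + (n - j)) mod n" for j
  have "Suc i mod n < n" and shift: "(Suc i mod n + (n - j)) mod n = Suc (l j) mod n" for j
    using Suc.prems by (simp_all add: l_def mod_simps)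
  have "(Tint n ^^ Suc k) a i = (Tint n ^^ k) a i + (Tint n ^^ k) a (Suc i mod n)"
    by (simp add: Tint_def)
  also have "\<dots> = (\<Sum>j<n. a j * c (l j)) + (\<Sum>j<n. a j * c (Suc (l j) mod n))"
    using Suc.IH Suc.prems \<open>Suc i mod n < n\<close> by (simp only: shift c_def l_def)
  also have "\<dots> = (\<Sum>j<n. a j * Tint n c (l j))"
    by (simp add: Tint_def sum.distrib distrib_left)
  finally show ?case by (simp add: c_def l_def)
qed

lemma eventual_period_reduce_orbit:
  assumes "eventual_period (\<lambda>k. reduce m n ((Tint n ^^ k) delta)) P"
  shows "eventual_period (\<lambda>k. reduce m n ((Tint n ^^ k) a)) P"
  using assms unfolding eventual_period_def
proof (rule eventually_mono)
  fix k
  assume "reduce m n ((Tint n ^^ (k + P)) delta) = reduce m n ((Tint n ^^ k) delta)"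
  then have delta_cong: "[(Tint n ^^ (k + P)) delta l = (Tint n ^^ k) delta l] (mod int m)"
    if "l < n" for l
    using that by (simp add: reduce_eq_iff)
  show "reduce m n ((Tint n ^^ (k + P)) a) = reduce m n ((Tint n ^^ k) a)"
    unfolding reduce_eq_iff
  proof (intro allI impI)
    fix i
    assume "i < n"
    then have "[(\<Sum>j<n. a j * (Tint n ^^ (k + P)) delta ((i + (n - j)) mod n))
              = (\<Sum>j<n. a j * (Tint n ^^ k) delta ((i + (n - j)) mod n))] (mod int m)"
      by (intro cong_sum cong_scalar_left delta_cong) simp
    then show "[(Tint n ^^ (k + P)) a i = (Tint n ^^ k) a i] (mod int m)"
      by (simp only: Tint_funpow_convolution[OF \<open>i < n\<close>])
  qed
qed

definition delta_period :: "nat \<Rightarrow> nat \<Rightarrow> nat" where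
  "delta_period m n = least_eventual_period (\<lambda>k. reduce m n ((Tint n ^^ k) delta))"

lemma cycle_length_reduce:
  "0 < n \<Longrightarrow> cycle_length m n (reduce m n a) = least_eventual_period (\<lambda>k. reduce m n ((Tint n ^^ k) a))"
  by (simp add: cycle_length_def least_eventual_period_def eventual_period_def
      eventually_sequentially Tmap_funpow_reduce)

lemma delta_orbit_eventually_periodic:
  assumes "0 < m" "0 < n"
  shows "\<exists>P>0. eventual_period (\<lambda>k. reduce m n ((Tint n ^^ k) delta)) P"
proof -
  have "range (\<lambda>k. (Tmap m n ^^ k) (reduce m n delta)) \<subseteq> vecs m n"
    using assms(2) by (auto simp: Tmap_funpow_reduce reduce_in_vecs[OF assms(1)])
  then have "\<exists>P>0. eventual_period (\<lambda>k. (Tmap m n ^^ k) (reduce m n delta)) P"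
    by (intro eventual_period_funpow finite_subset[OF _ finite_vecs])
  then show ?thesis using assms(2) by (simp add: Tmap_funpow_reduce)
qed

lemma delta_period_pos: "0 < m \<Longrightarrow> 0 < n \<Longrightarrow> 0 < delta_period m n"
  using delta_orbit_eventually_periodic least_eventual_period(1) unfolding delta_period_def by blast

lemma eventual_period_delta_iff_dvd:
  "0 < m \<Longrightarrow> 0 < n \<Longrightarrow>
    eventual_period (\<lambda>k. reduce m n ((Tint n ^^ k) delta)) P \<longleftrightarrow> delta_period m n dvd P"
  using delta_orbit_eventually_periodic eventual_period_iff_dvd unfolding delta_period_def by blast

lemma Pmax_eq_delta_period:
  assumes "0 < m" "0 < n"
  shows "Pmax m n = delta_period m n"
proof (unfold Pmax_def, rule Max_eqI)
  show "finite (cycle_length m n ` vecs m n)" by (simp add: finite_vecs)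
  have period: "eventual_period (\<lambda>k. reduce m n ((Tint n ^^ k) delta)) (delta_period m n)"
    using eventual_period_delta_iff_dvd[OF assms] by simp
  have pos: "0 < delta_period m n"
    using delta_period_pos[OF assms] .
  show "c \<le> delta_period m n" if "c \<in> cycle_length m n ` vecs m n" for c
  proof -
    from that obtain a where "a \<in> vecs m n" "c = cycle_length m n a" by blast
    then have c: "c = least_eventual_period (\<lambda>k. reduce m n ((Tint n ^^ k) a))"
      using cycle_length_reduce[OF assms(2), of m a] by (simp add: reduce_vecs)
    have "eventual_period (\<lambda>k. reduce m n ((Tint n ^^ k) a)) (delta_period m n)"
      by (rule eventual_period_reduce_orbit[OF period])
    then have "c dvd delta_period m n"
      unfolding c using eventual_period_iff_dvd pos by blast
    then show ?thesis using pos by (rule dvd_imp_le)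
  qed
  have "cycle_length m n (reduce m n delta) = delta_period m n"
    using assms(2) by (simp add: cycle_length_reduce delta_period_def)
  then show "delta_period m n \<in> cycle_length m n ` vecs m n"
    using reduce_in_vecs[OF assms(1), of n delta] by (metis image_eqI)
qed

lemma cong_prod_coprime_iff:
  fixes m :: "'i \<Rightarrow> 'a :: {unique_euclidean_ring, semiring_gcd}"
  assumes "finite A" "\<forall>i\<in>A. \<forall>j\<in>A. i \<noteq> j \<longrightarrow> coprime (m i) (m j)"
  shows "[x = y] (mod (\<Prod>i\<in>A. m i)) \<longleftrightarrow> (\<forall>i\<in>A. [x = y] (mod m i))"
proof
  assume cong: "[x = y] (mod (\<Prod>i\<in>A. m i))"
  show "\<forall>i\<in>A. [x = y] (mod m i)"
  proof
    fix i
    assume "i \<in> A"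
    with assms(1) have "m i dvd (\<Prod>i\<in>A. m i)" by (rule dvd_prodI)
    with cong show "[x = y] (mod m i)" by (rule cong_dvd_modulus)
  qed
next
  assume "\<forall>i\<in>A. [x = y] (mod m i)"
  then show "[x = y] (mod (\<Prod>i\<in>A. m i))"
    using assms(2) by (rule cong_cong_prod_coprime)
qed

lemma eventual_period_reduce_prod_iff:
  assumes "finite A" "\<forall>i\<in>A. \<forall>j\<in>A. i \<noteq> j \<longrightarrow> coprime (p i) (p j)"
  shows "eventual_period (\<lambda>k. reduce (\<Prod>i\<in>A. p i) n (g k)) P \<longleftrightarrow>
    (\<forall>i\<in>A. eventual_period (\<lambda>k. reduce (p i) n (g k)) P)"
proof -
  have "reduce (\<Prod>i\<in>A. p i) n u = reduce (\<Prod>i\<in>A. p i) n v \<longleftrightarrow>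
      (\<forall>i\<in>A. reduce (p i) n u = reduce (p i) n v)" for u v
  proof -
    have "reduce (\<Prod>i\<in>A. p i) n u = reduce (\<Prod>i\<in>A. p i) n v \<longleftrightarrow>
        (\<forall>l<n. \<forall>i\<in>A. [u l = v l] (mod int (p i)))"
      unfolding reduce_eq_iff of_nat_prod
      using cong_prod_coprime_iff[of A "\<lambda>i. int (p i)"] assms by simp
    then show ?thesis unfolding reduce_eq_iff by blast
  qed
  then show ?thesis
    using assms(1) by (simp add: eventual_period_def eventually_ball_finite_distrib)
qed

lemma delta_period_prod:
  assumes "0 < n" "finite A" "\<forall>i\<in>A. 0 < p i"
    and "\<forall>i\<in>A. \<forall>j\<in>A. i \<noteq> j \<longrightarrow> coprime (p i) (p j)"
  shows "delta_period (\<Prod>i\<in>A. p i) n = Lcm ((\<lambda>i. delta_period (p i) n) ` A)"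
proof -
  have prod_pos: "0 < (\<Prod>i\<in>A. p i)"
    using assms(3) by (simp add: prod_pos)
  have "delta_period (\<Prod>i\<in>A. p i) n dvd P \<longleftrightarrow> Lcm ((\<lambda>i. delta_period (p i) n) ` A) dvd P" for P
  proof -
    have "delta_period (\<Prod>i\<in>A. p i) n dvd P \<longleftrightarrow>
        eventual_period (\<lambda>k. reduce (\<Prod>i\<in>A. p i) n ((Tint n ^^ k) delta)) P"
      using eventual_period_delta_iff_dvd[OF prod_pos assms(1)] by simp
    also have "\<dots> \<longleftrightarrow> (\<forall>i\<in>A. eventual_period (\<lambda>k. reduce (p i) n ((Tint n ^^ k) delta)) P)"
      using assms(2,4) by (rule eventual_period_reduce_prod_iff)
    also have "\<dots> \<longleftrightarrow> (\<forall>i\<in>A. delta_period (p i) n dvd P)"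
      using assms(1,3) eventual_period_delta_iff_dvd by simp
    also have "\<dots> \<longleftrightarrow> Lcm ((\<lambda>i. delta_period (p i) n) ` A) dvd P"
      by (simp add: Lcm_dvd_iff)
    finally show ?thesis .
  qed
  from this[of "delta_period (\<Prod>i\<in>A. p i) n"] this[of "Lcm ((\<lambda>i. delta_period (p i) n) ` A)"]
  show ?thesis by (simp add: dvd_antisym)
qed

theorem theorem3p2:
  fixes n r :: nat and p :: "nat \<Rightarrow> nat"
  assumes "0 < n"
    and "\<forall>i<r. 0 < p i"
    and "\<forall>i<r. \<forall>j<r. i \<noteq> j \<longrightarrow> coprime (p i) (p j)"
  shows "Pmax (\<Prod>i<r. p i) n = Lcm ((\<lambda>i. Pmax (p i) n) ` {..<r})"
proof -
  have "0 < (\<Prod>i<r. p i)"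
    using assms(2) by (simp add: prod_pos)
  then have "Pmax (\<Prod>i<r. p i) n = delta_period (\<Prod>i<r. p i) n"
    using assms(1) by (rule Pmax_eq_delta_period)
  also have "\<dots> = Lcm ((\<lambda>i. delta_period (p i) n) ` {..<r})"
    using assms by (intro delta_period_prod) auto
  also have "(\<lambda>i. delta_period (p i) n) ` {..<r} = (\<lambda>i. Pmax (p i) n) ` {..<r}"
    using assms(1,2) by (simp add: Pmax_eq_delta_period)
  finally show ?thesis .
qed

end
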